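(* Let $C'$ be an odd-like binary Euclidean LCD $[n,k,d]$ code with $k\ge 1$. Then there exist a binary Euclidean LCD $[n,k-1,d']$ code $C$ with $d'\ge d$ (when $k\ge 2$), a generator matrix $G$ of $C$, and a vector $\mathbf{y}\in C^{\perp_E}$ of odd Hamming weight, such that $C'$ is equivalent to the binary code with generator matrix $\begin{pmatrix}\mathbf{y}\\ G\end{pmatrix}$.
   Context: A binary $[n,k,d]$ code is a $k$-dimensional subspace of $\mathbb{F}_2^n$ with minimum nonzero Hamming weight $d$. $C^{\perp_E}$ is the dual with respect to $\langle x,y\rangle_E=\sum x_iy_i$; $C$ is LCD if $C\cap C^{\perp_E}=\{0\}$. A binary code is odd-like if it contains a codeword $x$ with $\sum x_i=1$. Two codes are equivalent if one is obtained from the other by a coordinate permutation (monomial transformation). *)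

theory Defs
  imports "HOL-Combinatorics.Permutations"
begin

text \<open>Binary vectors of length n are modelled as functions nat => bool
  (True = 1 in F_2) vanishing outside {0..<n}.  Addition in F_2^n is pointwise xor.
  A matrix is a list of rows.\<close>

definition vecs :: "nat \<Rightarrow> (nat \<Rightarrow> bool) set" where
  "vecs n = {x. \<forall>i\<ge>n. \<not> x i}"

definition zero_vec :: "nat \<Rightarrow> bool" where
  "zero_vec = (\<lambda>_. False)"

definition vadd :: "(nat \<Rightarrow> bool) \<Rightarrow> (nat \<Rightarrow> bool) \<Rightarrow> (nat \<Rightarrow> bool)" where
  "vadd x y = (\<lambda>i. x i \<noteq> y i)"

definition wt :: "nat \<Rightarrow> (nat \<Rightarrow> bool) \<Rightarrow> nat" where
  "wt n x = card {i. i < n \<and> x i}"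

definition ip :: "nat \<Rightarrow> (nat \<Rightarrow> bool) \<Rightarrow> (nat \<Rightarrow> bool) \<Rightarrow> bool" where
  "ip n x y = odd (card {i. i < n \<and> x i \<and> y i})"

text \<open>Binary linear code of length n (over F_2, closure under addition suffices).\<close>
definition bin_code :: "nat \<Rightarrow> (nat \<Rightarrow> bool) set \<Rightarrow> bool" where
  "bin_code n C \<longleftrightarrow> C \<subseteq> vecs n \<and> zero_vec \<in> C \<and> (\<forall>x\<in>C. \<forall>y\<in>C. vadd x y \<in> C)"

definition sum_rows :: "(nat \<Rightarrow> bool) list \<Rightarrow> nat set \<Rightarrow> (nat \<Rightarrow> bool)" where
  "sum_rows G S = (\<lambda>j. odd (card {i\<in>S. (G ! i) j}))"

definition row_span :: "(nat \<Rightarrow> bool) list \<Rightarrow> (nat \<Rightarrow> bool) set" where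
  "row_span G = {sum_rows G S | S. S \<subseteq> {..<length G}}"

definition lin_indep :: "(nat \<Rightarrow> bool) list \<Rightarrow> bool" where
  "lin_indep G \<longleftrightarrow> (\<forall>S \<subseteq> {..<length G}. sum_rows G S = zero_vec \<longrightarrow> S = {})"

definition gen_matrix :: "nat \<Rightarrow> (nat \<Rightarrow> bool) set \<Rightarrow> (nat \<Rightarrow> bool) list \<Rightarrow> bool" where
  "gen_matrix n C G \<longleftrightarrow> set G \<subseteq> vecs n \<and> lin_indep G \<and> row_span G = C"

definition code_dim :: "nat \<Rightarrow> (nat \<Rightarrow> bool) set \<Rightarrow> nat \<Rightarrow> bool" where
  "code_dim n C k \<longleftrightarrow> (\<exists>G. gen_matrix n C G \<and> length G = k)"

definition min_dist :: "nat \<Rightarrow> (nat \<Rightarrow> bool) set \<Rightarrow> nat" where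
  "min_dist n C = Min {wt n x | x. x \<in> C \<and> x \<noteq> zero_vec}"

definition dual :: "nat \<Rightarrow> (nat \<Rightarrow> bool) set \<Rightarrow> (nat \<Rightarrow> bool) set" where
  "dual n C = {y \<in> vecs n. \<forall>x\<in>C. \<not> ip n x y}"

definition is_LCD :: "nat \<Rightarrow> (nat \<Rightarrow> bool) set \<Rightarrow> bool" where
  "is_LCD n C \<longleftrightarrow> C \<inter> dual n C = {zero_vec}"

text \<open>Odd-like: contains x with sum x_i = 1 in F_2, i.e. odd weight.\<close>
definition odd_like :: "nat \<Rightarrow> (nat \<Rightarrow> bool) set \<Rightarrow> bool" where
  "odd_like n C \<longleftrightarrow> (\<exists>x\<in>C. odd (wt n x))"

text \<open>Equivalence by a coordinate permutation (monomial maps over F_2 are permutations).\<close>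
definition code_equiv :: "nat \<Rightarrow> (nat \<Rightarrow> bool) set \<Rightarrow> (nat \<Rightarrow> bool) set \<Rightarrow> bool" where
  "code_equiv n C D \<longleftrightarrow> (\<exists>\<sigma>. \<sigma> permutes {..<n} \<and> D = (\<lambda>x. x \<circ> \<sigma>) ` C)"

end

theory Submission
  imports Defs
begin

text \<open>Pick \<open>y \<in> C'\<close> of odd weight, so \<open>\<langle>y, y\<rangle> = 1\<close>. Then \<open>C = C' \<inter> \<langle>y\<rangle>\<^sup>\<perp>\<close> is a
  hyperplane of \<open>C'\<close> not containing \<open>y\<close>: \<open>C'\<close> is the disjoint union of \<open>C\<close> and \<open>y + C\<close>,
  so \<open>dim C = k - 1\<close>. A vector of \<open>C\<close> orthogonal to \<open>C\<close> is also orthogonal to \<open>y\<close>, hence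
  to all of \<open>C'\<close>, so the LCD property passes from \<open>C'\<close> to \<open>C\<close>, and \<open>C \<subseteq> C'\<close> gives
  \<open>d(C) \<ge> d(C')\<close>. For any generator matrix \<open>G\<close> of \<open>C\<close>, the rows \<open>y, G\<close> generate \<open>C'\<close>
  itself, so the required equivalence is the identity permutation.\<close>

lemma odd_card_sym_diff:
  assumes "finite A" "finite B"
  shows "odd (card (sym_diff A B)) \<longleftrightarrow> odd (card A) \<noteq> odd (card B)"
proof -
  have "card (sym_diff A B) = card (A - B) + card (B - A)"
    using assms by (subst card_Un_disjoint) auto
  moreover have "card (A - B) = card A - card (A \<inter> B)" "card (B - A) = card B - card (A \<inter> B)"
    using assms by (simp_all add: card_Diff_subset_Int Int_commute)
  moreover have "card (A \<inter> B) \<le> card A" "card (A \<inter> B) \<le> card B"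
    using assms by (auto intro: card_mono)
  ultimately show ?thesis by presburger
qed

lemma vadd_vadd_cancel: "vadd x (vadd x y) = y"
  unfolding vadd_def by auto

lemma vadd_self: "vadd x x = zero_vec"
  unfolding vadd_def zero_vec_def by auto

lemma inj_vadd: "inj (vadd x)"
  by (metis injI vadd_vadd_cancel)

lemma card_Un_vadd_image:
  assumes "finite A" "A \<inter> vadd x ` A = {}"
  shows "card (A \<union> vadd x ` A) = 2 * card A"
  using assms card_image[OF inj_on_subset[OF inj_vadd]] by (simp add: card_Un_disjoint)

lemma ip_vadd_left: "ip n (vadd a b) y \<longleftrightarrow> ip n a y \<noteq> ip n b y"
proof -
  let ?A = "{i. i < n \<and> a i \<and> y i}" and ?B = "{i. i < n \<and> b i \<and> y i}"
  have "{i. i < n \<and> vadd a b i \<and> y i} = sym_diff ?A ?B"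
    by (auto simp: vadd_def)
  then show ?thesis
    unfolding ip_def using odd_card_sym_diff[of ?A ?B] by simp
qed

lemma ip_commute: "ip n a b = ip n b a"
  unfolding ip_def by (simp add: conj_commute conj_left_commute)

lemma ip_vadd_right: "ip n y (vadd a b) \<longleftrightarrow> ip n y a \<noteq> ip n y b"
  using ip_vadd_left ip_commute by metis

lemma ip_zero_left: "\<not> ip n zero_vec y"
  unfolding ip_def zero_vec_def by simp

lemma ip_zero_right: "\<not> ip n y zero_vec"
  using ip_zero_left ip_commute by metis

lemma ip_self: "ip n y y \<longleftrightarrow> odd (wt n y)"
  unfolding ip_def wt_def by simp

lemma finite_vecs: "finite (vecs n)"
  by (rule finite_subset[OF _ finite_set_of_finite_funs[of "{..<n}" UNIV False]])
    (auto simp: vecs_def)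

lemma bin_code_finite: "bin_code n C \<Longrightarrow> finite C"
  unfolding bin_code_def using finite_vecs finite_subset by blast

lemma bin_code_Int: "bin_code n A \<Longrightarrow> bin_code n B \<Longrightarrow> bin_code n (A \<inter> B)"
  unfolding bin_code_def by blast

lemma bin_code_dual: "bin_code n (dual n C)"
proof -
  have "zero_vec \<in> vecs n" unfolding vecs_def zero_vec_def by simp
  moreover have "vadd a b \<in> vecs n" if "a \<in> vecs n" "b \<in> vecs n" for a b
    using that unfolding vecs_def vadd_def by simp
  ultimately show ?thesis
    unfolding bin_code_def dual_def by (auto simp: ip_zero_right ip_vadd_right)
qed

lemma min_dist_antimono:
  assumes "C \<subseteq> C'" "c \<in> C" "c \<noteq> zero_vec"
  shows "min_dist n C' \<le> min_dist n C"
  unfolding min_dist_def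
proof (rule Min_antimono)
  show "{wt n x |x. x \<in> C \<and> x \<noteq> zero_vec} \<subseteq> {wt n x |x. x \<in> C' \<and> x \<noteq> zero_vec}"
    using assms(1) by blast
  show "{wt n x |x. x \<in> C \<and> x \<noteq> zero_vec} \<noteq> {}"
    using assms(2,3) by blast
  have "wt n x \<le> n" for x
    unfolding wt_def using card_mono[of "{..<n}" "{i. i < n \<and> x i}"] by auto
  then show "finite {wt n x |x. x \<in> C' \<and> x \<noteq> zero_vec}"
    by (auto intro: finite_subset[of _ "{..n}"])
qed

lemma code_equiv_refl: "code_equiv n C C"
  unfolding code_equiv_def by (intro exI[of _ id]) (simp add: permutes_id)

lemma sum_rows_empty: "sum_rows G {} = zero_vec"
  unfolding sum_rows_def zero_vec_def by simp

lemma sum_rows_sym_diff: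
  assumes "finite S" "finite T"
  shows "sum_rows G (sym_diff S T) = vadd (sum_rows G S) (sum_rows G T)"
proof
  fix j
  let ?A = "{i\<in>S. (G ! i) j}" and ?B = "{i\<in>T. (G ! i) j}"
  have "{i\<in>sym_diff S T. (G ! i) j} = sym_diff ?A ?B" by auto
  then show "sum_rows G (sym_diff S T) j = vadd (sum_rows G S) (sum_rows G T) j"
    unfolding sum_rows_def vadd_def using odd_card_sym_diff[of ?A ?B] assms by simp
qed

lemma sum_rows_Cons:
  assumes "finite S"
  shows "sum_rows (x # G) S =
    (if 0 \<in> S then vadd x (sum_rows G (Suc -` S)) else sum_rows G (Suc -` S))"
proof
  fix j
  have fin: "finite {i\<in>Suc -` S. (G ! i) j}"
    using finite_vimageI[OF assms inj_Suc] by (rule finite_subset[rotated]) blast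
  have "{i\<in>S. ((x # G) ! i) j} = {i \<in> S \<inter> {0}. x j} \<union> Suc ` {i\<in>Suc -` S. (G ! i) j}"
    by (rule set_eqI) (auto simp: image_iff nth_Cons split: nat.splits)
  then have "card {i\<in>S. ((x # G) ! i) j} = card {i \<in> S \<inter> {0}. x j} + card {i\<in>Suc -` S. (G ! i) j}"
    using fin by (simp only:) (subst card_Un_disjoint, auto simp: card_image)
  then show "sum_rows (x # G) S j =
      (if 0 \<in> S then vadd x (sum_rows G (Suc -` S)) else sum_rows G (Suc -` S)) j"
    unfolding sum_rows_def vadd_def by (cases "0 \<in> S"; cases "x j") auto
qed

lemma row_span_eq_image: "row_span G = sum_rows G ` Pow {..<length G}"
  unfolding row_span_def by auto

lemma sum_rows_in_row_span: "S \<subseteq> {..<length G} \<Longrightarrow> sum_rows G S \<in> row_span G"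
  unfolding row_span_def by blast

lemma finite_row_span: "finite (row_span G)"
  unfolding row_span_eq_image by simp

lemma vadd_in_row_span:
  assumes "a \<in> row_span G" "b \<in> row_span G"
  shows "vadd a b \<in> row_span G"
proof -
  obtain S T where "S \<subseteq> {..<length G}" "a = sum_rows G S" "T \<subseteq> {..<length G}" "b = sum_rows G T"
    using assms unfolding row_span_def by auto
  then show ?thesis
    unfolding row_span_def
    by (auto intro!: exI[of _ "sym_diff S T"] sum_rows_sym_diff[symmetric]
        dest: finite_subset)
qed

lemma row_span_Nil: "row_span [] = {zero_vec}"
  unfolding row_span_def using sum_rows_empty by auto

lemma row_span_Cons: "row_span (x # G) = row_span G \<union> vadd x ` row_span G"
proof
  show "row_span (x # G) \<subseteq> row_span G \<union> vadd x ` row_span G"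
  proof
    fix v assume "v \<in> row_span (x # G)"
    then obtain S where S: "S \<subseteq> {..<Suc (length G)}" "v = sum_rows (x # G) S"
      unfolding row_span_def by auto
    then have "Suc -` S \<subseteq> {..<length G}" by auto
    then have "sum_rows G (Suc -` S) \<in> row_span G"
      by (rule sum_rows_in_row_span)
    moreover have "finite S"
      using S(1) finite_subset by blast
    ultimately show "v \<in> row_span G \<union> vadd x ` row_span G"
      using S(2) sum_rows_Cons[of S x G] by (cases "0 \<in> S") auto
  qed
next
  have "sum_rows G T \<in> row_span (x # G) \<and> vadd x (sum_rows G T) \<in> row_span (x # G)"
    if T: "T \<subseteq> {..<length G}" for T
  proof -
    have "finite T"
      using T finite_subset by blast
    moreover have "Suc -` Suc ` T = T" "Suc -` insert 0 (Suc ` T) = T"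
      by auto
    ultimately have "sum_rows (x # G) (Suc ` T) = sum_rows G T"
      "sum_rows (x # G) (insert 0 (Suc ` T)) = vadd x (sum_rows G T)"
      using sum_rows_Cons[of _ x G] by simp_all
    moreover have "Suc ` T \<subseteq> {..<length (x # G)}" "insert 0 (Suc ` T) \<subseteq> {..<length (x # G)}"
      using T by auto
    ultimately show ?thesis
      using sum_rows_in_row_span by metis
  qed
  then show "row_span G \<union> vadd x ` row_span G \<subseteq> row_span (x # G)"
    unfolding row_span_eq_image[of G] by blast
qed

lemma row_span_subset:
  assumes "bin_code n C" "set G \<subseteq> C"
  shows "row_span G \<subseteq> C"
  using assms(2)
proof (induction G)
  case Nil
  then show ?case using assms(1) unfolding row_span_Nil bin_code_def by auto
next
  case (Cons x G)
  then show ?case using assms(1) unfolding row_span_Cons bin_code_def by auto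
qed

lemma lin_indep_iff_card_row_span: "lin_indep G \<longleftrightarrow> card (row_span G) = 2 ^ length G"
proof -
  have "card (row_span G) = 2 ^ length G \<longleftrightarrow> inj_on (sum_rows G) (Pow {..<length G})"
    unfolding row_span_eq_image
    using inj_on_iff_eq_card[of "Pow {..<length G}" "sum_rows G"] by (simp add: card_Pow)
  also have "\<dots> \<longleftrightarrow> lin_indep G"
  proof
    assume "inj_on (sum_rows G) (Pow {..<length G})"
    then show "lin_indep G"
      unfolding lin_indep_def inj_on_def using sum_rows_empty[of G] by auto
  next
    assume indep: "lin_indep G"
    show "inj_on (sum_rows G) (Pow {..<length G})"
    proof (rule inj_onI)
      fix S T
      assume S: "S \<in> Pow {..<length G}" and T: "T \<in> Pow {..<length G}"
        and eq: "sum_rows G S = sum_rows G T"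
      have "finite S" "finite T"
        using S T finite_subset by auto
      then have "sum_rows G (sym_diff S T) = zero_vec"
        using sum_rows_sym_diff[of S T G] eq vadd_self by simp
      moreover have "sym_diff S T \<subseteq> {..<length G}"
        using S T by blast
      ultimately have "sym_diff S T = {}"
        using indep unfolding lin_indep_def by blast
      then show "S = T" by blast
    qed
  qed
  finally show ?thesis ..
qed

lemma lin_indep_Cons:
  assumes "lin_indep G" "x \<notin> row_span G"
  shows "lin_indep (x # G)"
proof -
  have "row_span G \<inter> vadd x ` row_span G = {}"
  proof (rule ccontr)
    assume "row_span G \<inter> vadd x ` row_span G \<noteq> {}"
    then obtain r r' where r: "r \<in> row_span G" "r' \<in> row_span G" and "r = vadd x r'"
      by blast
    then have "x = vadd r r'"
      by (auto simp: vadd_def fun_eq_iff)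
    with vadd_in_row_span[OF r] assms(2) show False
      by simp
  qed
  then have "card (row_span (x # G)) = 2 * card (row_span G)"
    unfolding row_span_Cons by (rule card_Un_vadd_image[OF finite_row_span])
  with assms(1) show ?thesis
    by (simp add: lin_indep_iff_card_row_span)
qed

lemma gen_matrix_exists:
  assumes code: "bin_code n C"
  shows "\<exists>G. gen_matrix n C G"
proof -
  let ?indep = "\<lambda>G. set G \<subseteq> C \<and> lin_indep G"
  have bounded: "\<forall>G. ?indep G \<longrightarrow> length G < Suc (card C)"
  proof (intro allI impI)
    fix G assume "?indep G"
    have "length G < 2 ^ length G" by simp
    also have "\<dots> = card (row_span G)"
      using \<open>?indep G\<close> lin_indep_iff_card_row_span by simp
    also have "\<dots> \<le> card C"
      using \<open>?indep G\<close> row_span_subset[OF code] bin_code_finite[OF code] by (simp add: card_mono)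
    finally show "length G < Suc (card C)" by simp
  qed
  have "?indep []"
    unfolding lin_indep_def by simp
  then obtain G where G: "?indep G" and longest: "\<forall>H. ?indep H \<longrightarrow> length H \<le> length G"
    using ex_has_greatest_nat[of ?indep "[]" length "Suc (card C)", OF _ bounded] by blast
  have "row_span G = C"
  proof (rule ccontr)
    assume "row_span G \<noteq> C"
    then obtain x where "x \<in> C" "x \<notin> row_span G"
      using row_span_subset[OF code] G by blast
    then have "?indep (x # G)"
      using G lin_indep_Cons by auto
    then have "length (x # G) \<le> length G"
      using longest by blast
    then show False by simp
  qed
  moreover have "set G \<subseteq> vecs n"
    using G code unfolding bin_code_def by auto
  ultimately show ?thesis
    unfolding gen_matrix_def using G by blast
qed

lemma card_eq_if_gen_matrix: "gen_matrix n C G \<Longrightarrow> card C = 2 ^ length G"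
  unfolding gen_matrix_def using lin_indep_iff_card_row_span by auto

lemma code_dim_iff_card:
  assumes "bin_code n C"
  shows "code_dim n C k \<longleftrightarrow> card C = 2 ^ k"
proof
  assume "code_dim n C k"
  then show "card C = 2 ^ k"
    unfolding code_dim_def using card_eq_if_gen_matrix by blast
next
  assume card: "card C = 2 ^ k"
  obtain G where G: "gen_matrix n C G"
    using gen_matrix_exists[OF assms] by blast
  then have "length G = k"
    using card card_eq_if_gen_matrix[OF G] by simp
  with G show "code_dim n C k"
    unfolding code_dim_def by blast
qed

lemma ex_nonzero_if_code_dim:
  assumes "code_dim n C k" "k \<ge> 1"
  shows "\<exists>c\<in>C. c \<noteq> zero_vec"
proof -
  obtain G where "gen_matrix n C G" "length G = k"
    using assms(1) unfolding code_dim_def by blast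
  then have "card C = 2 ^ k"
    by (simp add: card_eq_if_gen_matrix)
  then have "card C \<ge> 2"
    using assms(2) power_increasing[of 1 k "2::nat"] by simp
  then have "\<not> C \<subseteq> {zero_vec}"
    using card_mono[of "{zero_vec}" C] by auto
  then show ?thesis by blast
qed

lemma code_split_by_odd_vector:
  assumes code: "bin_code n C'" and y: "y \<in> C'" "odd (wt n y)"
  defines "C \<equiv> C' \<inter> dual n {y}"
  shows "C' = C \<union> vadd y ` C" and "C \<inter> vadd y ` C = {}"
proof -
  have C_iff: "c \<in> C \<longleftrightarrow> c \<in> C' \<and> \<not> ip n c y" for c
    using code unfolding C_def dual_def bin_code_def by (auto simp: ip_commute)
  have yy: "ip n y y"
    using y(2) ip_self by simp
  have closed: "vadd y c \<in> C'" if "c \<in> C'" for c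
    using code y(1) that unfolding bin_code_def by blast
  have image: "vadd y ` C = {c \<in> C'. ip n c y}"
  proof
    show "vadd y ` C \<subseteq> {c \<in> C'. ip n c y}"
      using closed yy by (auto simp: C_iff ip_vadd_left)
    show "{c \<in> C'. ip n c y} \<subseteq> vadd y ` C"
    proof
      fix c assume "c \<in> {c \<in> C'. ip n c y}"
      then have "vadd y c \<in> C"
        using closed yy by (auto simp: C_iff ip_vadd_left)
      then show "c \<in> vadd y ` C"
        using vadd_vadd_cancel by (metis image_eqI)
    qed
  qed
  show "C' = C \<union> vadd y ` C" and "C \<inter> vadd y ` C = {}"
    unfolding image using C_iff by auto
qed

lemma is_LCD_Int_dual_odd_vector:
  assumes code: "bin_code n C'" and lcd: "is_LCD n C'" and y: "y \<in> C'" "odd (wt n y)"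
  shows "is_LCD n (C' \<inter> dual n {y})"
proof -
  let ?C = "C' \<inter> dual n {y}"
  have "?C \<inter> dual n ?C \<subseteq> C' \<inter> dual n C'"
  proof
    fix c assume c: "c \<in> ?C \<inter> dual n ?C"
    then have "\<not> ip n x c" if "x \<in> ?C \<union> vadd y ` ?C" for x
      using that unfolding dual_def by (auto simp: ip_vadd_left)
    then show "c \<in> C' \<inter> dual n C'"
      using c code_split_by_odd_vector(1)[OF code y] unfolding dual_def by auto
  qed
  moreover have "zero_vec \<in> ?C \<inter> dual n ?C"
    using code bin_code_dual bin_code_Int unfolding bin_code_def by blast
  ultimately show ?thesis
    using lcd unfolding is_LCD_def by blast
qed

lemma code_dim_Int_dual_odd_vector:
  assumes code: "bin_code n C'" and dim: "code_dim n C' k" and y: "y \<in> C'" "odd (wt n y)"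
  shows "code_dim n (C' \<inter> dual n {y}) (k - 1)"
proof -
  let ?C = "C' \<inter> dual n {y}"
  have code_C: "bin_code n ?C"
    using code bin_code_dual bin_code_Int by blast
  have "2 ^ k = card C'"
    using dim code_dim_iff_card[OF code] by simp
  also have "\<dots> = card (?C \<union> vadd y ` ?C)"
    using code_split_by_odd_vector(1)[OF code y] by (rule arg_cong)
  also have "\<dots> = 2 * card ?C"
    using bin_code_finite[OF code_C] code_split_by_odd_vector(2)[OF code y] by (rule card_Un_vadd_image)
  finally have "card ?C = 2 ^ (k - 1)"
    by (cases k) auto
  then show ?thesis
    using code_dim_iff_card[OF code_C] by simp
qed

theorem theorem3p11:
  fixes n k d :: nat and C' :: "(nat \<Rightarrow> bool) set"
  assumes "bin_code n C'" and "code_dim n C' k" and "k \<ge> 1"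
    and "min_dist n C' = d"
    and "is_LCD n C'" and "odd_like n C'"
  shows "\<exists>C G y. bin_code n C \<and> is_LCD n C \<and> code_dim n C (k - 1)
           \<and> (k \<ge> 2 \<longrightarrow> min_dist n C \<ge> d)
           \<and> gen_matrix n C G
           \<and> y \<in> dual n C \<and> odd (wt n y)
           \<and> code_equiv n C' (row_span (y # G))"
proof -
  obtain y where y: "y \<in> C'" "odd (wt n y)"
    using assms(6) unfolding odd_like_def by blast
  define C where "C = C' \<inter> dual n {y}"
  have code: "bin_code n C"
    unfolding C_def using assms(1) bin_code_dual bin_code_Int by blast
  have dim: "code_dim n C (k - 1)"
    unfolding C_def using code_dim_Int_dual_odd_vector[OF assms(1,2) y] .
  obtain G where G: "gen_matrix n C G"
    using gen_matrix_exists[OF code] by blast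
  have "min_dist n C \<ge> d" if k: "k \<ge> 2"
  proof -
    have "k - 1 \<ge> 1"
      using k by simp
    then obtain c where "c \<in> C" "c \<noteq> zero_vec"
      using ex_nonzero_if_code_dim[OF dim] by blast
    then show ?thesis
      using min_dist_antimono[of C C' c n] assms(4) unfolding C_def by blast
  qed
  moreover have "y \<in> dual n C"
    using y assms(1) unfolding C_def dual_def bin_code_def by (auto simp: ip_commute)
  moreover have "code_equiv n C' (row_span (y # G))"
    using G code_split_by_odd_vector(1)[OF assms(1) y, folded C_def] code_equiv_refl
    unfolding row_span_Cons gen_matrix_def by simp
  ultimately show ?thesis
    using code is_LCD_Int_dual_odd_vector[OF assms(1,5) y, folded C_def] dim G y(2) by blast
qed

end
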